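(* Let $S\subset\{2,\dots,p\}$ with cardinality ${\rm s}$, let $\gamma^S_S:=\Sigma_{S,S}^{-1}\mathbb{E}\mathbf{x}_S^T\mathbf{x}_{-1}\gamma^0$ be the coefficient vector of the projection of $\mathbf{x}_{-1}\gamma^0$ on $\mathbf{x}_S$, let $\gamma^S\in\mathbb{R}^{p-1}$ be $\gamma^S_S$ completed with zeroes outside $S$, and let $v^S:=\Sigma_{-1,-1}(\gamma^0-\gamma^S)$ with $v^S_{-S}$ its subvector of entries indexed by $\{2,\dots,p\}\setminus S$. Then $$\|v^S_{-S}\|_\infty\le\big\vert\!\big\vert\!\big\vert\Sigma_{-S,-S}-\Sigma_{-S,S}\Sigma_{S,S}^{-1}\Sigma_{S,-S}\big\vert\!\big\vert\!\big\vert_1\,\|\gamma^0_{-S}\|_\infty.$$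
   Context: $\mathbf{x}=(\mathbf{x}_1,\dots,\mathbf{x}_p)$ is a zero-mean Gaussian row vector with nonsingular covariance $\Sigma$; $\mathbf{x}_{-1}=(\mathbf{x}_2,\dots,\mathbf{x}_p)$, $\Sigma_{-1,-1}=\mathbb{E}\mathbf{x}_{-1}^T\mathbf{x}_{-1}$, $\gamma^0:=\Sigma_{-1,-1}^{-1}\mathbb{E}\mathbf{x}_{-1}^T\mathbf{x}_1\in\mathbb{R}^{p-1}$, with entries indexed by $\{2,\dots,p\}$. For $S\subset\{2,\dots,p\}$, $-S:=\{2,\dots,p\}\setminus S$, $\mathbf{x}_S=\{\mathbf{x}_j\}_{j\in S}$, $\mathbf{x}_{-S}=\{\mathbf{x}_j\}_{j\in -S}$, $\Sigma_{S,S}=\mathbb{E}\mathbf{x}_S^T\mathbf{x}_S$, $\Sigma_{-S,-S}=\mathbb{E}\mathbf{x}_{-S}^T\mathbf{x}_{-S}$, $\Sigma_{S,-S}=\mathbb{E}\mathbf{x}_S^T\mathbf{x}_{-S}=\Sigma_{-S,S}^T$; $\gamma^0_{-S}$ is the subvector of $\gamma^0$ indexed by $-S$. For a matrix $A=(a_{j,k})$, $\vert\!\vert\!\vert A\vert\!\vert\!\vert_1:=\max_j\sum_k|a_{j,k}|$. *)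

theory Defs
  imports Complex_Main
begin

text \<open>Matrices and vectors are represented as functions on natural-number indices,
  only the entries inside the relevant index sets matter.\<close>

definition inv_on :: "nat set \<Rightarrow> (nat \<Rightarrow> nat \<Rightarrow> real) \<Rightarrow> (nat \<Rightarrow> nat \<Rightarrow> real)" where
  "inv_on I A = (THE B. (\<forall>i\<in>I. \<forall>j\<in>I. (\<Sum>k\<in>I. A i k * B k j) = (if i = j then 1 else 0))
                       \<and> (\<forall>i j. i \<notin> I \<or> j \<notin> I \<longrightarrow> B i j = 0))"

definition sup_norm_on :: "nat set \<Rightarrow> (nat \<Rightarrow> real) \<Rightarrow> real" where
  "sup_norm_on I v = Max (insert 0 ((\<lambda>i. \<bar>v i\<bar>) ` I))"

definition mat_norm1_on :: "nat set \<Rightarrow> (nat \<Rightarrow> nat \<Rightarrow> real) \<Rightarrow> real" where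
  "mat_norm1_on I A = Max (insert 0 ((\<lambda>j. \<Sum>k\<in>I. \<bar>A j k\<bar>) ` I))"

end

theory Submission
  imports Defs "HOL-Library.Function_Algebras"
begin

text \<open>Subtracting the projection of \<open>x\<^sub>-\<^sub>1\<gamma>\<^sup>0\<close> on \<open>x\<^sub>S\<close> replaces \<open>\<Sigma>\<close> by
  \<open>M = \<Sigma> - \<Sigma>\<^sub>\<cdot>\<^sub>,\<^sub>S \<Sigma>\<^sub>S\<^sub>,\<^sub>S\<^sup>-\<^sup>1 \<Sigma>\<^sub>S\<^sub>,\<^sub>\<cdot>\<close>, i.e. \<open>v\<^sup>S = M \<gamma>\<^sup>0\<close>. The columns of \<open>M\<close>
  indexed by \<open>S\<close> vanish, so \<open>v\<^sup>S\<^sub>-\<^sub>S = M\<^sub>-\<^sub>S\<^sub>,\<^sub>-\<^sub>S \<gamma>\<^sup>0\<^sub>-\<^sub>S\<close>, and the claim is the bound of the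
  sup-norm operator norm by the maximal absolute row sum. The only analytic input is that
  \<open>\<Sigma>\<^sub>S\<^sub>,\<^sub>S\<close> is invertible (as a principal submatrix of a positive definite matrix), so that
  \<open>inv_on S \<Sigma>\<close> really is a two-sided inverse; it exists because the columns of a
  positive definite matrix are linearly independent.\<close>

definition pos_def_on :: "nat set \<Rightarrow> (nat \<Rightarrow> nat \<Rightarrow> real) \<Rightarrow> bool" where
  "pos_def_on I A \<longleftrightarrow> (\<forall>x. (\<exists>i\<in>I. x i \<noteq> 0) \<longrightarrow> (\<Sum>i\<in>I. \<Sum>j\<in>I. x i * A i j * x j) > 0)"

lemma pos_def_on_kernel_zero:
  assumes "pos_def_on I A" "\<forall>i\<in>I. (\<Sum>j\<in>I. A i j * x j) = 0" "j \<in> I"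
  shows "x j = 0"
proof (rule ccontr)
  assume "x j \<noteq> 0"
  then have "(\<Sum>i\<in>I. \<Sum>j\<in>I. x i * A i j * x j) > 0"
    using assms(1,3) unfolding pos_def_on_def by blast
  moreover have "(\<Sum>i\<in>I. \<Sum>j\<in>I. x i * A i j * x j) = (\<Sum>i\<in>I. x i * (\<Sum>j\<in>I. A i j * x j))"
    by (simp add: sum_distrib_left mult.assoc)
  ultimately show False
    using assms(2) by simp
qed

lemma pos_def_on_subset:
  assumes "pos_def_on J A" "I \<subseteq> J" "finite J"
  shows "pos_def_on I A"
  unfolding pos_def_on_def
proof (intro allI impI)
  fix x :: "nat \<Rightarrow> real"
  assume "\<exists>i\<in>I. x i \<noteq> 0"
  define y where "y i = (if i \<in> I then x i else 0)" for i
  have "\<exists>i\<in>J. y i \<noteq> 0"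
    using \<open>\<exists>i\<in>I. x i \<noteq> 0\<close> \<open>I \<subseteq> J\<close> by (auto simp: y_def)
  then have "(\<Sum>i\<in>J. \<Sum>j\<in>J. y i * A i j * y j) > 0"
    using assms(1) unfolding pos_def_on_def by blast
  also have "(\<Sum>i\<in>J. \<Sum>j\<in>J. y i * A i j * y j) = (\<Sum>i\<in>I. \<Sum>j\<in>J. y i * A i j * y j)"
    using assms(2,3) by (intro sum.mono_neutral_right) (auto simp: y_def)
  also have "\<dots> = (\<Sum>i\<in>I. \<Sum>j\<in>I. y i * A i j * y j)"
    using assms(2,3) by (intro sum.cong refl sum.mono_neutral_right) (auto simp: y_def)
  also have "\<dots> = (\<Sum>i\<in>I. \<Sum>j\<in>I. x i * A i j * x j)"
    by (intro sum.cong) (auto simp: y_def)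
  finally show "(\<Sum>i\<in>I. \<Sum>j\<in>I. x i * A i j * x j) > 0" .
qed

definition scale_fun :: "real \<Rightarrow> (nat \<Rightarrow> real) \<Rightarrow> nat \<Rightarrow> real" where
  "scale_fun c f = (\<lambda>i. c * f i)"

interpretation fun_vs: vector_space scale_fun
  unfolding vector_space_def module_def scale_fun_def
  by (auto simp: fun_eq_iff algebra_simps)

lemma sum_fun_apply: "(\<Sum>x\<in>A. (f x :: nat \<Rightarrow> real)) i = (\<Sum>x\<in>A. f x i)"
  by (induct A rule: infinite_finite_induct) auto

definition unit_vec :: "nat \<Rightarrow> nat \<Rightarrow> real" where
  "unit_vec m = (\<lambda>i. if i = m then 1 else 0)"

definition column_on :: "(nat \<Rightarrow> nat \<Rightarrow> real) \<Rightarrow> nat set \<Rightarrow> nat \<Rightarrow> nat \<Rightarrow> real" where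
  "column_on A I j = (\<lambda>i. if i \<in> I then A i j else 0)"

lemma in_span_unit_vecs:
  assumes "finite I" "\<forall>i. i \<notin> I \<longrightarrow> w i = 0"
  shows "w \<in> fun_vs.span (unit_vec ` I)"
proof -
  have "w = (\<Sum>m\<in>I. scale_fun (w m) (unit_vec m))"
    using assms by (auto simp: fun_eq_iff sum_fun_apply scale_fun_def unit_vec_def if_distrib
                         cong: if_cong)
  also have "\<dots> \<in> fun_vs.span (unit_vec ` I)"
    by (intro fun_vs.span_sum fun_vs.span_scale fun_vs.span_base) auto
  finally show ?thesis .
qed

lemma sum_scale_columns_apply:
  assumes "i \<in> I"
  shows "(\<Sum>j\<in>I. scale_fun (c j) (column_on A I j)) i = (\<Sum>j\<in>I. A i j * c j)"
  using assms by (simp add: sum_fun_apply scale_fun_def column_on_def mult.commute)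

lemma pos_def_on_columns_combination_zero:
  assumes "pos_def_on I A" "(\<Sum>j\<in>I. scale_fun (c j) (column_on A I j)) = 0" "j \<in> I"
  shows "c j = 0"
  using pos_def_on_kernel_zero[OF assms(1) _ assms(3)] assms(2)
  by (metis sum_scale_columns_apply zero_fun_def)

lemma pos_def_on_inj_on_columns:
  assumes "pos_def_on I A" "finite I"
  shows "inj_on (column_on A I) I"
proof (rule inj_onI)
  fix j k
  assume jk: "j \<in> I" "k \<in> I" "column_on A I j = column_on A I k"
  define x where "x = (\<lambda>l. unit_vec j l - unit_vec k l)"
  have "(\<Sum>l\<in>I. A i l * x l) = 0" if "i \<in> I" for i
  proof -
    have "(\<Sum>l\<in>I. A i l * x l) = (\<Sum>l\<in>I. A i l * unit_vec j l) - (\<Sum>l\<in>I. A i l * unit_vec k l)"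
      by (simp add: x_def right_diff_distrib sum_subtractf)
    also have "\<dots> = A i j - A i k"
      using jk assms(2) by (simp add: unit_vec_def if_distrib cong: if_cong)
    also have "\<dots> = 0"
      using jk(3) that by (simp add: column_on_def fun_eq_iff) (metis)
    finally show ?thesis .
  qed
  then have "x j = 0"
    using pos_def_on_kernel_zero[OF assms(1) _ jk(1)] by blast
  then show "j = k"
    by (auto simp: x_def unit_vec_def split: if_splits)
qed

lemma pos_def_on_columns_independent:
  assumes "pos_def_on I A" "finite I"
  shows "fun_vs.independent (column_on A I ` I)"
proof (rule fun_vs.independent_if_scalars_zero)
  show "finite (column_on A I ` I)"
    using assms(2) by simp
next
  fix f x
  assume "(\<Sum>x\<in>column_on A I ` I. scale_fun (f x) x) = 0" "x \<in> column_on A I ` I"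
  then obtain j where "j \<in> I" "x = column_on A I j"
    "(\<Sum>j\<in>I. scale_fun (f (column_on A I j)) (column_on A I j)) = 0"
    by (auto simp: sum.reindex[OF pos_def_on_inj_on_columns[OF assms]])
  then show "f x = 0"
    using pos_def_on_columns_combination_zero[OF assms(1), of "\<lambda>j. f (column_on A I j)"]
    by blast
qed

lemma pos_def_on_unit_vec_in_span_columns:
  assumes "pos_def_on I A" "finite I" "m \<in> I"
  shows "unit_vec m \<in> fun_vs.span (column_on A I ` I)"
proof (rule ccontr)
  let ?C = "column_on A I ` I"
  assume not_span: "unit_vec m \<notin> fun_vs.span ?C"
  then have "unit_vec m \<notin> ?C"
    using fun_vs.span_base by blast
  have "fun_vs.independent (insert (unit_vec m) ?C)"
    using not_span pos_def_on_columns_independent[OF assms(1,2)]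
    by (simp add: fun_vs.independent_insert)
  moreover have "insert (unit_vec m) ?C \<subseteq> fun_vs.span (unit_vec ` I)"
    using assms(2,3) by (auto simp: column_on_def intro: fun_vs.span_base in_span_unit_vecs)
  ultimately have "card (insert (unit_vec m) ?C) \<le> card (unit_vec ` I)"
    using fun_vs.independent_span_bound assms(2) by blast
  also have "\<dots> \<le> card ?C"
    using card_image_le[OF assms(2)] card_image[OF pos_def_on_inj_on_columns[OF assms(1,2)]]
    by simp
  finally show False
    using \<open>unit_vec m \<notin> ?C\<close> assms(2) by simp
qed

definition right_inverse_on :: "nat set \<Rightarrow> (nat \<Rightarrow> nat \<Rightarrow> real) \<Rightarrow> (nat \<Rightarrow> nat \<Rightarrow> real) \<Rightarrow> bool" where
  "right_inverse_on I A B \<longleftrightarrow>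
     (\<forall>i\<in>I. \<forall>j\<in>I. (\<Sum>k\<in>I. A i k * B k j) = (if i = j then 1 else 0))
     \<and> (\<forall>i j. i \<notin> I \<or> j \<notin> I \<longrightarrow> B i j = 0)"

lemma inv_on_def': "inv_on I A = (THE B. right_inverse_on I A B)"
  by (simp add: inv_on_def right_inverse_on_def)

lemma pos_def_on_right_inverse_exists:
  assumes "pos_def_on I A" "finite I"
  shows "\<exists>B. right_inverse_on I A B"
proof -
  have "\<exists>u. unit_vec m = (\<Sum>j\<in>I. scale_fun (u j) (column_on A I j))" if m: "m \<in> I" for m
  proof -
    obtain u where "unit_vec m = (\<Sum>v\<in>column_on A I ` I. scale_fun (u v) v)"
      using pos_def_on_unit_vec_in_span_columns[OF assms m] fun_vs.span_finite assms(2)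
      by auto
    then show ?thesis
      by (auto simp: sum.reindex[OF pos_def_on_inj_on_columns[OF assms]])
  qed
  then obtain U where U: "\<And>m. m \<in> I \<Longrightarrow> unit_vec m = (\<Sum>j\<in>I. scale_fun (U m j) (column_on A I j))"
    by metis
  define B where "B j m = (if j \<in> I \<and> m \<in> I then U m j else 0)" for j m
  have "(\<Sum>k\<in>I. A i k * B k m) = (if i = m then 1 else 0)" if "i \<in> I" "m \<in> I" for i m
  proof -
    have "(\<Sum>k\<in>I. A i k * B k m) = (\<Sum>k\<in>I. A i k * U m k)"
      using that by (auto simp: B_def intro: sum.cong)
    also have "\<dots> = unit_vec m i"
      using sum_scale_columns_apply[OF \<open>i \<in> I\<close>] U[OF \<open>m \<in> I\<close>] by simp
    finally show ?thesis
      by (simp add: unit_vec_def)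
  qed
  then have "right_inverse_on I A B"
    by (auto simp: right_inverse_on_def B_def)
  then show ?thesis
    by blast
qed

lemma pos_def_on_right_inverse_unique:
  assumes "pos_def_on I A" "right_inverse_on I A B" "right_inverse_on I A B'"
  shows "B = B'"
proof (intro ext)
  fix j m
  show "B j m = B' j m"
  proof (cases "j \<in> I \<and> m \<in> I")
    case True
    have "\<forall>i\<in>I. (\<Sum>k\<in>I. A i k * (B k m - B' k m)) = 0"
      using assms(2,3) True by (simp add: right_inverse_on_def right_diff_distrib sum_subtractf)
    then show ?thesis
      using pos_def_on_kernel_zero[OF assms(1)] True by fastforce
  next
    case False
    then show ?thesis
      using assms(2,3) by (auto simp: right_inverse_on_def)
  qed
qed

lemma right_inverse_on_inv_on:
  assumes "pos_def_on I A" "finite I"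
  shows "right_inverse_on I A (inv_on I A)"
proof -
  obtain B where "right_inverse_on I A B"
    using pos_def_on_right_inverse_exists[OF assms] by blast
  moreover from this have "inv_on I A = B"
    unfolding inv_on_def' using pos_def_on_right_inverse_unique[OF assms(1)] by blast
  ultimately show ?thesis
    by simp
qed

text \<open>A one-sided inverse is two-sided: \<open>A (B A - 1) = 0\<close> on \<open>I\<close>, and \<open>A\<close> has trivial kernel.\<close>

lemma inv_on_left_inverse:
  assumes "pos_def_on I A" "finite I" "i \<in> I" "j \<in> I"
  shows "(\<Sum>k\<in>I. inv_on I A i k * A k j) = (if i = j then 1 else 0)"
proof -
  let ?B = "inv_on I A"
  have right_inv: "(\<Sum>k\<in>I. A l k * ?B k m) = (if l = m then 1 else 0)" if "l \<in> I" "m \<in> I" for l m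
    using right_inverse_on_inv_on[OF assms(1,2)] that
    by (simp add: right_inverse_on_def)
  define d where "d l = (\<Sum>k\<in>I. ?B l k * A k j) - (if l = j then 1 else 0)" for l
  have "(\<Sum>l\<in>I. A i' l * d l) = 0" if "i' \<in> I" for i'
  proof -
    have "(\<Sum>l\<in>I. A i' l * (\<Sum>k\<in>I. ?B l k * A k j)) = (\<Sum>k\<in>I. (\<Sum>l\<in>I. A i' l * ?B l k) * A k j)"
      by (simp add: sum_distrib_left sum_distrib_right mult.assoc) (rule sum.swap)
    also have "\<dots> = (\<Sum>k\<in>I. if i' = k then A k j else 0)"
      using right_inv that by (intro sum.cong) auto
    also have "\<dots> = A i' j"
      using that assms(2) by simp
    moreover have "(\<Sum>l\<in>I. A i' l * (if l = j then 1 else 0)) = A i' j"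
      using assms(2,4) by (simp add: if_distrib cong: if_cong)
    ultimately show ?thesis
      by (simp add: d_def right_diff_distrib sum_subtractf)
  qed
  then have "d i = 0"
    using pos_def_on_kernel_zero[OF assms(1) _ assms(3)] by blast
  then show ?thesis
    by (simp add: d_def)
qed

definition schur_compl :: "nat set \<Rightarrow> (nat \<Rightarrow> nat \<Rightarrow> real) \<Rightarrow> nat \<Rightarrow> nat \<Rightarrow> real" where
  "schur_compl S A i j = A i j - (\<Sum>k\<in>S. \<Sum>l\<in>S. A i k * inv_on S A k l * A l j)"

text \<open>The coefficients \<open>\<gamma>\<^sup>S\<close> of the projection of \<open>\<Sum>\<^sub>l\<^sub>\<in>\<^sub>T x\<^sub>l g\<^sub>l\<close> on \<open>x\<^sub>S\<close>, for the Gram matrix \<open>A\<close>.\<close>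

definition proj_coef :: "nat set \<Rightarrow> nat set \<Rightarrow> (nat \<Rightarrow> nat \<Rightarrow> real) \<Rightarrow> (nat \<Rightarrow> real) \<Rightarrow> nat \<Rightarrow> real" where
  "proj_coef S T A g k = (if k \<in> S then (\<Sum>m\<in>S. inv_on S A k m * (\<Sum>l\<in>T. A m l * g l)) else 0)"

lemma schur_compl_eq_0:
  assumes "pos_def_on S A" "finite S" "l \<in> S"
  shows "schur_compl S A i l = 0"
proof -
  have "(\<Sum>k\<in>S. \<Sum>m\<in>S. A i k * inv_on S A k m * A m l) = (\<Sum>k\<in>S. A i k * (\<Sum>m\<in>S. inv_on S A k m * A m l))"
    by (simp add: sum_distrib_left mult.assoc)
  also have "\<dots> = (\<Sum>k\<in>S. if k = l then A i k else 0)"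
    using inv_on_left_inverse[OF assms(1,2) _ assms(3)] by (intro sum.cong) auto
  also have "\<dots> = A i l"
    using assms(2,3) by simp
  finally show ?thesis
    by (simp add: schur_compl_def)
qed

lemma residual_eq_schur_compl_mult:
  assumes "pos_def_on S A" "finite T" "S \<subseteq> T"
  shows "(\<Sum>k\<in>T. A i k * (g k - proj_coef S T A g k)) = (\<Sum>l\<in>T - S. schur_compl S A i l * g l)"
proof -
  have "finite S"
    using assms(2,3) finite_subset by blast
  have "(\<Sum>k\<in>T. A i k * proj_coef S T A g k)
        = (\<Sum>k\<in>S. A i k * (\<Sum>m\<in>S. inv_on S A k m * (\<Sum>l\<in>T. A m l * g l)))"
    using assms(2,3) by (intro sum.mono_neutral_cong_right) (auto simp: proj_coef_def)
  also have "\<dots> = (\<Sum>k\<in>S. \<Sum>m\<in>S. \<Sum>l\<in>T. A i k * inv_on S A k m * A m l * g l)"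
    by (simp add: sum_distrib_left mult.assoc)
  also have "\<dots> = (\<Sum>l\<in>T. \<Sum>k\<in>S. \<Sum>m\<in>S. A i k * inv_on S A k m * A m l * g l)"
    by (subst sum.swap) (simp only: sum.swap[of _ T S])
  also have "\<dots> = (\<Sum>l\<in>T. (\<Sum>k\<in>S. \<Sum>m\<in>S. A i k * inv_on S A k m * A m l) * g l)"
    by (simp add: sum_distrib_right)
  finally have "(\<Sum>k\<in>T. A i k * (g k - proj_coef S T A g k)) = (\<Sum>l\<in>T. schur_compl S A i l * g l)"
    by (simp add: schur_compl_def right_diff_distrib left_diff_distrib sum_subtractf)
  also have "\<dots> = (\<Sum>l\<in>T - S. schur_compl S A i l * g l)"
    using assms(2) schur_compl_eq_0[OF assms(1) \<open>finite S\<close>] by (intro sum.mono_neutral_right) auto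
  finally show ?thesis .
qed

lemma sup_norm_on_nonneg: "finite I \<Longrightarrow> 0 \<le> sup_norm_on I v"
  unfolding sup_norm_on_def by (intro Max_ge) auto

lemma abs_le_sup_norm_on: "finite I \<Longrightarrow> i \<in> I \<Longrightarrow> \<bar>v i\<bar> \<le> sup_norm_on I v"
  unfolding sup_norm_on_def by (intro Max_ge) auto

lemma sup_norm_on_le: "finite I \<Longrightarrow> 0 \<le> c \<Longrightarrow> (\<And>i. i \<in> I \<Longrightarrow> \<bar>v i\<bar> \<le> c) \<Longrightarrow> sup_norm_on I v \<le> c"
  unfolding sup_norm_on_def by (intro Max.boundedI) auto

lemma mat_norm1_on_nonneg: "finite I \<Longrightarrow> 0 \<le> mat_norm1_on I A"
  unfolding mat_norm1_on_def by (intro Max_ge) auto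

lemma row_sum_le_mat_norm1_on: "finite I \<Longrightarrow> i \<in> I \<Longrightarrow> (\<Sum>j\<in>I. \<bar>A i j\<bar>) \<le> mat_norm1_on I A"
  unfolding mat_norm1_on_def by (intro Max_ge) auto

lemma sup_norm_on_mat_mult_le:
  assumes "finite I"
  shows "sup_norm_on I (\<lambda>i. \<Sum>j\<in>I. A i j * g j) \<le> mat_norm1_on I A * sup_norm_on I g"
proof (rule sup_norm_on_le[OF assms])
  show "0 \<le> mat_norm1_on I A * sup_norm_on I g"
    using assms by (simp add: mat_norm1_on_nonneg sup_norm_on_nonneg)
next
  fix i
  assume "i \<in> I"
  have "\<bar>\<Sum>j\<in>I. A i j * g j\<bar> \<le> (\<Sum>j\<in>I. \<bar>A i j\<bar> * \<bar>g j\<bar>)"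
    using sum_abs[of "\<lambda>j. A i j * g j" I] by (simp add: abs_mult)
  also have "\<dots> \<le> (\<Sum>j\<in>I. \<bar>A i j\<bar> * sup_norm_on I g)"
    using assms by (intro sum_mono mult_left_mono abs_le_sup_norm_on) auto
  also have "\<dots> \<le> mat_norm1_on I A * sup_norm_on I g"
    unfolding sum_distrib_right[symmetric] using assms \<open>i \<in> I\<close>
    by (intro mult_right_mono row_sum_le_mat_norm1_on sup_norm_on_nonneg)
  finally show "\<bar>\<Sum>j\<in>I. A i j * g j\<bar> \<le> mat_norm1_on I A * sup_norm_on I g" .
qed

theorem lemma3p3:
  fixes p :: nat and \<Sigma> :: "nat \<Rightarrow> nat \<Rightarrow> real" and S :: "nat set"
    and \<gamma>0 \<gamma>S v :: "nat \<Rightarrow> real"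
  assumes sym: "\<forall>i\<in>{1..p}. \<forall>j\<in>{1..p}. \<Sigma> i j = \<Sigma> j i"
    and posdef: "\<forall>x :: nat \<Rightarrow> real. (\<exists>i\<in>{1..p}. x i \<noteq> 0) \<longrightarrow>
                    (\<Sum>i\<in>{1..p}. \<Sum>j\<in>{1..p}. x i * \<Sigma> i j * x j) > 0"
    and S_sub: "S \<subseteq> {2..p}"
  defines "\<gamma>0 \<equiv> (\<lambda>i. if i \<in> {2..p} then (\<Sum>k\<in>{2..p}. inv_on {2..p} \<Sigma> i k * \<Sigma> k 1) else 0)"
    and "\<gamma>S \<equiv> (\<lambda>i. if i \<in> S then (\<Sum>k\<in>S. inv_on S \<Sigma> i k * (\<Sum>l\<in>{2..p}. \<Sigma> k l * \<gamma>0 l)) else 0)"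
    and "v \<equiv> (\<lambda>i. \<Sum>k\<in>{2..p}. \<Sigma> i k * (\<gamma>0 k - \<gamma>S k))"
  shows "sup_norm_on ({2..p} - S) v
         \<le> mat_norm1_on ({2..p} - S)
              (\<lambda>i j. \<Sigma> i j - (\<Sum>k\<in>S. \<Sum>l\<in>S. \<Sigma> i k * inv_on S \<Sigma> k l * \<Sigma> l j))
           * sup_norm_on ({2..p} - S) \<gamma>0"
proof -
  have "pos_def_on {1..p} \<Sigma>"
    using posdef unfolding pos_def_on_def .
  then have "pos_def_on S \<Sigma>"
    by (rule pos_def_on_subset) (use S_sub in auto)
  moreover have "\<gamma>S = proj_coef S {2..p} \<Sigma> \<gamma>0"
    by (simp add: \<gamma>S_def proj_coef_def fun_eq_iff)
  ultimately have "v = (\<lambda>i. \<Sum>l\<in>{2..p} - S. schur_compl S \<Sigma> i l * \<gamma>0 l)"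
    using residual_eq_schur_compl_mult[OF _ _ S_sub] by (simp add: v_def)
  then show ?thesis
    using sup_norm_on_mat_mult_le[of "{2..p} - S" "schur_compl S \<Sigma>" \<gamma>0]
    by (simp add: schur_compl_def [abs_def])
qed

end
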